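(* Let $\mathcal H$ be a complex Hilbert space and $A,B,X\in\mathcal B(\mathcal H)$ with $B\neq0$ and $X$ positive. Let $\{x_n\}\subset\mathcal H$ with $\|x_n\|=1$ and $w(AXB)=\lim_{n\to\infty}|\langle AXBx_n,x_n\rangle|$. Then $$w(AXB)\le\frac{\|X\|}{2}\left(\big\||A^*|^2+|B|^2\big\|-\lim_{n\to\infty}\frac{\|A^*x_n\|}{2\|Bx_n\|}\inf_{\lambda\in\mathbb C}\|(B-\lambda A^* )x_n\|^2\right)\le\frac{\|X\|}{2}\big\||A^*|^2+|B|^2\big\|$$ (the limit being assumed to exist). In particular, taking $X=I$, $$w(AB)\le\frac12\big\||A^*|^2+|B|^2\big\|-\lim_{n\to\infty}\frac{\|A^*x_n\|}{4\|Bx_n\|}\inf_{\lambda\in\mathbb C}\|(B-\lambda A^* )x_n\|^2\le\frac12\big\||A^*|^2+|B|^2\big\|,$$ where now $\{x_n\}$ is a sequence of unit vectors with $w(AB)=\lim_n|\langle ABx_n,x_n\rangle|$.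
   Context: $|S|=(S^*S)^{1/2}$ for $S\in\mathcal B(\mathcal H)$; $\|\cdot\|$ is the operator norm; $w(S)=\sup\{|\langle Sx,x\rangle|:\|x\|=1\}$ is the numerical radius. *)

theory Defs
  imports "HOL-Analysis.Analysis"
begin

text \<open>Complex vector spaces, complex inner product spaces and complex Hilbert spaces
  (not available in the distribution libraries). Inner product linear in the first argument.\<close>

class complex_vector = real_vector +
  fixes scaleC :: "complex \<Rightarrow> 'a \<Rightarrow> 'a" (infixr \<open>*\<^sub>C\<close> 75)
  assumes scaleC_add_right: "a *\<^sub>C (x + y) = a *\<^sub>C x + a *\<^sub>C y"
    and scaleC_add_left: "(a + b) *\<^sub>C x = a *\<^sub>C x + b *\<^sub>C x"
    and scaleC_scaleC: "a *\<^sub>C (b *\<^sub>C x) = (a * b) *\<^sub>C x"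
    and scaleC_one: "1 *\<^sub>C x = x"
    and scaleR_scaleC: "scaleR r x = complex_of_real r *\<^sub>C x"

class complex_normed_vector = complex_vector + real_normed_vector +
  assumes norm_scaleC: "norm (a *\<^sub>C x) = cmod a * norm x"

class complex_inner = complex_normed_vector +
  fixes cinner :: "'a \<Rightarrow> 'a \<Rightarrow> complex"
  assumes cinner_conj: "cinner x y = cnj (cinner y x)"
    and cinner_add_left: "cinner (x + y) z = cinner x z + cinner y z"
    and cinner_scaleC_left: "cinner (a *\<^sub>C x) y = a * cinner x y"
    and cinner_self_real: "Im (cinner x x) = 0"
    and cinner_self_nonneg: "0 \<le> Re (cinner x x)"
    and cinner_self_eq_zero: "cinner x x = 0 \<longleftrightarrow> x = 0"
    and norm_eq_sqrt_cinner: "norm x = sqrt (Re (cinner x x))"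

class chilbert_space = complex_inner + complete_space

definition bounded_clinear_op :: "('a::complex_normed_vector \<Rightarrow> 'a) \<Rightarrow> bool" where
  "bounded_clinear_op T \<longleftrightarrow>
     (\<forall>x y. T (x + y) = T x + T y) \<and> (\<forall>c x. T (c *\<^sub>C x) = c *\<^sub>C T x) \<and>
     (\<exists>K. \<forall>x. norm (T x) \<le> K * norm x)"

definition is_adjoint :: "('a::complex_inner \<Rightarrow> 'a) \<Rightarrow> ('a \<Rightarrow> 'a) \<Rightarrow> bool" where
  "is_adjoint T Td \<longleftrightarrow> (\<forall>x y. cinner (T x) y = cinner x (Td y))"

definition positive_op :: "('a::complex_inner \<Rightarrow> 'a) \<Rightarrow> bool" where
  "positive_op X \<longleftrightarrow> (\<forall>x. Im (cinner (X x) x) = 0 \<and> 0 \<le> Re (cinner (X x) x))"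

definition numerical_radius :: "('a::complex_inner \<Rightarrow> 'a) \<Rightarrow> real" where
  "numerical_radius T = (SUP x\<in>{x. norm x = 1}. cmod (cinner (T x) x))"

end

theory Submission imports Defs begin

text \<open>Write \<open>u = B x\<close> and \<open>v = A\<^sup>* x\<close>, so that \<open>\<langle>AXBx, x\<rangle> = \<langle>Xu, v\<rangle>\<close>.
  For positive \<open>X\<close>, polarization gives \<open>4 Re \<langle>Xu, w\<rangle> \<le> \<langle>X(u + w), u + w\<rangle> \<le> \<parallel>X\<parallel> \<parallel>u + w\<parallel>\<^sup>2\<close>;
  taking \<open>w = s v\<close> with \<open>|s| = 1\<close> and \<open>\<langle>Xu, s v\<rangle> = |\<langle>Xu, v\<rangle>|\<close> yields
  \<open>4 |\<langle>Xu, v\<rangle>| \<le> \<parallel>X\<parallel> (\<parallel>u\<parallel>\<^sup>2 + \<parallel>v\<parallel>\<^sup>2 + 2 |\<langle>u, v\<rangle>|)\<close>.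
  The distance from \<open>u\<close> to the line \<open>\<complex> v\<close> satisfies
  \<open>\<parallel>v\<parallel>\<^sup>2 inf\<^sub>\<lambda> \<parallel>u - \<lambda> v\<parallel>\<^sup>2 = \<parallel>u\<parallel>\<^sup>2 \<parallel>v\<parallel>\<^sup>2 - |\<langle>u, v\<rangle>|\<^sup>2\<close>, and with \<open>a = \<parallel>v\<parallel>\<close>, \<open>b = \<parallel>u\<parallel>\<close>,
  \<open>p = |\<langle>u, v\<rangle>|\<close> the elementary inequality \<open>2pab + a\<^sup>2b\<^sup>2 - p\<^sup>2 \<le> 2a\<^sup>2b\<^sup>2 \<le> ab (a\<^sup>2 + b\<^sup>2)\<close>
  trades the term \<open>2p\<close> for this distance. Finally
  \<open>\<parallel>u\<parallel>\<^sup>2 + \<parallel>v\<parallel>\<^sup>2 = Re \<langle>(AA\<^sup>* + B\<^sup>*B) x, x\<rangle> \<le> \<parallel>AA\<^sup>* + B\<^sup>*B\<parallel>\<close> for unit \<open>x\<close>, and the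
  pointwise bound passes to the limit along \<open>x\<^sub>n\<close>.\<close>

lemma cinner_add_right: "cinner x (y + z) = cinner x y + cinner x z"
  by (metis cinner_conj cinner_add_left complex_cnj_add)

lemma cinner_scaleC_right: "cinner x (a *\<^sub>C y) = cnj a * cinner x y"
  by (metis cinner_conj cinner_scaleC_left complex_cnj_mult)

lemma cinner_diff_left: "cinner (x - y) z = cinner x z - cinner y z"
  using cinner_add_left[of "x - y" y z] by simp

lemma cinner_diff_right: "cinner x (y - z) = cinner x y - cinner x z"
  using cinner_add_right[of x "y - z" z] by simp

lemma cinner_zero_right [simp]: "cinner x 0 = 0"
  using cinner_add_right[of x 0 0] by simp

lemma cinner_self_eq_norm_sq: "cinner x x = complex_of_real ((norm x)\<^sup>2)"
  by (simp add: complex_eqI cinner_self_real cinner_self_nonneg norm_eq_sqrt_cinner)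

lemma norm_sq_eq_Re_cinner: "(norm x)\<^sup>2 = Re (cinner x x)"
  by (simp add: cinner_self_eq_norm_sq)

lemma norm_add_sq: "(norm (x + y))\<^sup>2 = (norm x)\<^sup>2 + (norm y)\<^sup>2 + 2 * Re (cinner x y)"
proof -
  have "Re (cinner y x) = Re (cinner x y)" by (subst cinner_conj) simp
  then show ?thesis by (simp add: norm_sq_eq_Re_cinner cinner_add_left cinner_add_right)
qed

lemma norm_diff_projection_sq:
  fixes x y :: "'a::complex_inner"
  assumes "y \<noteq> 0"
  shows "(norm (x - (cinner x y / cinner y y) *\<^sub>C y))\<^sup>2 = (norm x)\<^sup>2 - (cmod (cinner x y))\<^sup>2 / (norm y)\<^sup>2"
proof -
  define c where "c = cinner x y"
  define N where "N = complex_of_real ((norm y)\<^sup>2)"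
  have "N \<noteq> 0" using assms by (simp add: N_def)
  have yy: "cinner y y = N" by (simp add: cinner_self_eq_norm_sq N_def)
  have yx: "cinner y x = cnj c" by (simp add: c_def cinner_conj[of y x])
  have cc: "c * cnj c = complex_of_real ((cmod c)\<^sup>2)" by (metis complex_norm_square of_real_power)
  have "cinner (x - (c / N) *\<^sub>C y) (x - (c / N) *\<^sub>C y)
      = cinner x x - cnj (c / N) * c - c / N * cnj c + c / N * cnj (c / N) * N"
    by (simp add: cinner_diff_left cinner_diff_right cinner_scaleC_left cinner_scaleC_right
        yy yx c_def[symmetric])
  also have "\<dots> = cinner x x - c * cnj c / N"
    using \<open>N \<noteq> 0\<close> by (simp add: N_def field_simps)
  also have "\<dots> = complex_of_real ((norm x)\<^sup>2 - (cmod c)\<^sup>2 / (norm y)\<^sup>2)"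
    by (simp add: cc cinner_self_eq_norm_sq N_def)
  finally show ?thesis
    by (simp add: norm_sq_eq_Re_cinner c_def yy)
qed

lemma cinner_Cauchy_Schwarz: "cmod (cinner x y) \<le> norm x * norm y"
proof (cases "y = 0")
  case False
  then have "(cmod (cinner x y))\<^sup>2 / (norm y)\<^sup>2 \<le> (norm x)\<^sup>2"
    using norm_diff_projection_sq[of y x] by (metis diff_ge_0_iff_ge zero_le_power2)
  with False have "(cmod (cinner x y))\<^sup>2 \<le> (norm x * norm y)\<^sup>2"
    by (simp add: pos_divide_le_eq power_mult_distrib)
  then show ?thesis by (rule power2_le_imp_le) simp
qed simp

lemma Re_cinner_le_norm_mult: "Re (cinner x y) \<le> norm x * norm y"
  using complex_Re_le_cmod cinner_Cauchy_Schwarz order_trans by blast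

lemma INF_norm_diff_scaleC_nonneg: "0 \<le> (INF l::complex. (norm (u - l *\<^sub>C v))\<^sup>2)"
  by (rule cINF_greatest) auto

lemma norm_sq_mult_INF_norm_diff_scaleC_le:
  "(norm v)\<^sup>2 * (INF l::complex. (norm (u - l *\<^sub>C v))\<^sup>2)
     \<le> (norm u)\<^sup>2 * (norm v)\<^sup>2 - (cmod (cinner u v))\<^sup>2"
proof (cases "v = 0")
  case False
  have "(INF l::complex. (norm (u - l *\<^sub>C v))\<^sup>2) \<le> (norm (u - (cinner u v / cinner v v) *\<^sub>C v))\<^sup>2"
    by (rule cINF_lower) (auto intro: bdd_belowI[where m = 0])
  with False show ?thesis
    by (simp add: norm_diff_projection_sq mult_left_mono field_simps)
qed simp

lemma bounded_clinear_op_imp_bounded_linear: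
  assumes "bounded_clinear_op T"
  shows "bounded_linear T"
proof -
  from assms obtain K where "\<And>x. norm (T x) \<le> K * norm x"
    unfolding bounded_clinear_op_def by blast
  with assms show ?thesis
    unfolding bounded_clinear_op_def
    by (intro bounded_linear_intro[where K = K]) (auto simp: scaleR_scaleC mult.commute)
qed

lemma is_adjoint_bounded_linear:
  fixes T Td :: "'a::complex_inner \<Rightarrow> 'a"
  assumes T: "bounded_clinear_op T" and adj: "is_adjoint T Td"
  shows "bounded_linear Td"
proof -
  have "bounded_linear T"
    using T by (rule bounded_clinear_op_imp_bounded_linear)
  define K where "K = onorm T"
  have K: "\<And>x. norm (T x) \<le> K * norm x" and "K \<ge> 0"
    using \<open>bounded_linear T\<close> by (simp_all add: K_def onorm onorm_pos_le)
  have ad: "\<And>z y. cinner (T z) y = cinner z (Td y)"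
    using adj unfolding is_adjoint_def by blast
  have eq_by_cinner: "w = w'" if "\<And>z. cinner z w = cinner z w'" for w w' :: 'a
  proof -
    have "cinner (w - w') (w - w') = 0"
      using that by (simp add: cinner_diff_right)
    then show ?thesis by (simp add: cinner_self_eq_zero)
  qed
  show ?thesis
  proof (rule bounded_linear_intro[where K = K])
    show "Td (x + y) = Td x + Td y" for x y
      by (rule eq_by_cinner) (simp add: cinner_add_right ad[symmetric])
    show "Td (scaleR r x) = scaleR r (Td x)" for r x
      by (rule eq_by_cinner) (simp add: scaleR_scaleC cinner_scaleC_right ad[symmetric])
  next
    fix y
    have "(norm (Td y))\<^sup>2 = Re (cinner (T (Td y)) y)"
      by (simp add: norm_sq_eq_Re_cinner ad)
    also have "\<dots> \<le> norm (T (Td y)) * norm y"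
      by (rule Re_cinner_le_norm_mult)
    also have "\<dots> \<le> K * norm (Td y) * norm y"
      by (simp add: K mult_right_mono)
    finally have "norm (Td y) * norm (Td y) \<le> norm (Td y) * (norm y * K)"
      by (simp add: power2_eq_square algebra_simps)
    then show "norm (Td y) \<le> norm y * K"
      by (cases "Td y = 0") (simp_all add: \<open>K \<ge> 0\<close>)
  qed
qed

lemma positive_op_Re_cinner_le:
  assumes X: "bounded_clinear_op X" and pos: "positive_op X"
  shows "4 * Re (cinner (X u) w) \<le> Re (cinner (X (u + w)) (u + w))"
proof -
  have add: "\<And>x y. X (x + y) = X x + X y" and scale: "\<And>c x. X (c *\<^sub>C x) = c *\<^sub>C X x"
    using X unfolding bounded_clinear_op_def by blast+
  have diff: "\<And>x y. X (x - y) = X x - X y"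
    by (metis add diff_add_cancel eq_diff_eq)
  have polarization: "cinner (X (u + y)) (u + y) - cinner (X (u - y)) (u - y)
      = 2 * (cinner (X u) y + cinner (X y) u)" for y
    by (simp add: add diff cinner_add_left cinner_add_right cinner_diff_left cinner_diff_right)
  have nonneg: "Im (cinner (X y) y) = 0" "0 \<le> Re (cinner (X y) y)" for y
    using pos unfolding positive_op_def by blast+
  txt \<open>Polarizing along \<open>\<i> w\<close> shows that \<open>X\<close> is Hermitian in the real part.\<close>
  have "Im (cinner (X (u + \<i> *\<^sub>C w)) (u + \<i> *\<^sub>C w) - cinner (X (u - \<i> *\<^sub>C w)) (u - \<i> *\<^sub>C w)) = 0"
    by (simp add: nonneg)
  then have "Re (cinner (X w) u) = Re (cinner (X u) w)"
    unfolding polarization by (simp add: scale cinner_scaleC_left cinner_scaleC_right)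
  moreover have "Re (cinner (X (u + w)) (u + w)) - Re (cinner (X (u - w)) (u - w))
      = 2 * Re (cinner (X u) w) + 2 * Re (cinner (X w) u)"
    using arg_cong[OF polarization[of w], of Re] by simp
  ultimately show ?thesis
    using nonneg(2)[of "u - w"] by linarith
qed

lemma positive_op_cmod_cinner_le:
  assumes X: "bounded_clinear_op X" and pos: "positive_op X"
    and K: "\<And>z. norm (X z) \<le> K * norm z" and "0 \<le> K"
  shows "4 * cmod (cinner (X u) v) \<le> K * ((norm u)\<^sup>2 + (norm v)\<^sup>2 + 2 * cmod (cinner u v))"
proof -
  define s where "s = sgn (cinner (X u) v)"
  have "cmod s \<le> 1" by (simp add: s_def norm_sgn)
  have "cnj s * cinner (X u) v = complex_of_real (cmod (cinner (X u) v))"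
    by (cases "cinner (X u) v = 0")
      (simp_all add: s_def sgn_eq mult.commute complex_norm_square[symmetric] power2_eq_square)
  then have "Re (cinner (X u) (s *\<^sub>C v)) = cmod (cinner (X u) v)"
    by (simp add: cinner_scaleC_right)
  then have "4 * cmod (cinner (X u) v) \<le> Re (cinner (X (u + s *\<^sub>C v)) (u + s *\<^sub>C v))"
    using positive_op_Re_cinner_le[OF X pos] by metis
  also have "\<dots> \<le> norm (X (u + s *\<^sub>C v)) * norm (u + s *\<^sub>C v)"
    by (rule Re_cinner_le_norm_mult)
  also have "\<dots> \<le> K * (norm (u + s *\<^sub>C v))\<^sup>2"
    using mult_right_mono[OF K norm_ge_zero] by (simp add: power2_eq_square mult.assoc)
  also have "\<dots> \<le> K * ((norm u)\<^sup>2 + (norm v)\<^sup>2 + 2 * cmod (cinner u v))"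
  proof (rule mult_left_mono[OF _ \<open>0 \<le> K\<close>])
    have "Re (cinner u (s *\<^sub>C v)) \<le> cmod (cinner u v)"
      using complex_Re_le_cmod[of "cinner u (s *\<^sub>C v)"] \<open>cmod s \<le> 1\<close>
      by (simp add: cinner_scaleC_right norm_mult mult_left_le_one_le order_trans)
    moreover have "(cmod s * norm v)\<^sup>2 \<le> (norm v)\<^sup>2"
      using \<open>cmod s \<le> 1\<close> by (simp add: power_mono mult_left_le_one_le)
    ultimately show "(norm (u + s *\<^sub>C v))\<^sup>2 \<le> (norm u)\<^sup>2 + (norm v)\<^sup>2 + 2 * cmod (cinner u v)"
      unfolding norm_add_sq norm_scaleC by linarith
  qed
  finally show ?thesis .
qed

lemma sum_squares_cross_term_le:
  fixes a b p I :: real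
  assumes "0 \<le> a" "0 \<le> b" "0 \<le> p" "p \<le> a * b" "a\<^sup>2 * I \<le> a\<^sup>2 * b\<^sup>2 - p\<^sup>2"
  shows "(a\<^sup>2 + b\<^sup>2 + 2 * p) / 4 \<le> (a\<^sup>2 + b\<^sup>2) / 2 - a / (4 * b) * I"
proof (cases "a = 0 \<or> b = 0")
  case True
  with assms have p: "p = 0" and "a / (4 * b) * I = 0" by auto
  have "0 \<le> a\<^sup>2 + b\<^sup>2" by simp
  then show ?thesis
    unfolding p \<open>a / (4 * b) * I = 0\<close> by simp
next
  case False
  with assms have "0 < a" "0 < b" by auto
  have "I \<le> b\<^sup>2 - p\<^sup>2 / a\<^sup>2"
    using assms(5) \<open>0 < a\<close> by (simp add: field_simps)
  then have "a / (4 * b) * I \<le> a / (4 * b) * (b\<^sup>2 - p\<^sup>2 / a\<^sup>2)"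
    using \<open>0 < a\<close> \<open>0 < b\<close> by (intro mult_left_mono) simp_all
  also have "\<dots> = a * b / 4 - p\<^sup>2 / (a * b) / 4"
    using \<open>0 < a\<close> \<open>0 < b\<close> by (simp add: field_simps power2_eq_square)
  finally have "a / (4 * b) * I \<le> a * b / 4 - p\<^sup>2 / (a * b) / 4" .
  moreover have "2 * p - a * b \<le> p\<^sup>2 / (a * b)"
  proof -
    have "(2 * p - a * b) * (a * b) \<le> p\<^sup>2"
      using zero_le_power2[of "a * b - p"] by (simp add: power2_eq_square algebra_simps)
    then show ?thesis
      using \<open>0 < a\<close> \<open>0 < b\<close> by (simp add: pos_le_divide_eq)
  qed
  moreover have "2 * (a * b) \<le> a\<^sup>2 + b\<^sup>2"
    using sum_squares_bound[of a b] by simp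
  ultimately show ?thesis by argo
qed

lemma positive_op_cmod_cinner_le_refined:
  assumes X: "bounded_clinear_op X" and pos: "positive_op X"
    and K: "\<And>z. norm (X z) \<le> K * norm z" and "0 \<le> K"
  shows "cmod (cinner (X u) v)
    \<le> K * (((norm u)\<^sup>2 + (norm v)\<^sup>2) / 2
            - norm v / (4 * norm u) * (INF l::complex. (norm (u - l *\<^sub>C v))\<^sup>2))"
proof -
  have "cmod (cinner (X u) v) \<le> K * (((norm v)\<^sup>2 + (norm u)\<^sup>2 + 2 * cmod (cinner u v)) / 4)"
    using positive_op_cmod_cinner_le[OF X pos K \<open>0 \<le> K\<close>, of u v] by (simp add: add.commute)
  also have "\<dots> \<le> K * (((norm v)\<^sup>2 + (norm u)\<^sup>2) / 2
            - norm v / (4 * norm u) * (INF l::complex. (norm (u - l *\<^sub>C v))\<^sup>2))"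
    using cinner_Cauchy_Schwarz[of u v] norm_sq_mult_INF_norm_diff_scaleC_le[of v u]
    by (intro mult_left_mono[OF sum_squares_cross_term_le \<open>0 \<le> K\<close>]) (simp_all add: mult.commute)
  finally show ?thesis by (simp add: add.commute)
qed

lemma norm_sq_adjoint_add_norm_sq_le_onorm:
  fixes A B Ad Bd :: "'a::complex_inner \<Rightarrow> 'a"
  assumes A: "bounded_clinear_op A" and B: "bounded_clinear_op B"
    and adA: "is_adjoint A Ad" and adB: "is_adjoint B Bd" and "norm x = 1"
  shows "(norm (Ad x))\<^sup>2 + (norm (B x))\<^sup>2 \<le> onorm (\<lambda>v. A (Ad v) + Bd (B v))"
proof -
  have "bounded_linear (\<lambda>v. A (Ad v) + Bd (B v))"
    using A B adA adB
    by (intro bounded_linear_add bounded_linear_compose[of A Ad] bounded_linear_compose[of Bd B])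
      (auto intro: bounded_clinear_op_imp_bounded_linear is_adjoint_bounded_linear)
  note onorm = onorm[OF this]
  have "cinner (B x) (B x) = cnj (cinner (Bd (B x)) x)"
    using adB by (simp add: is_adjoint_def cinner_conj[of x])
  then have "(norm (Ad x))\<^sup>2 + (norm (B x))\<^sup>2 = Re (cinner (A (Ad x) + Bd (B x)) x)"
    using adA by (simp add: norm_sq_eq_Re_cinner is_adjoint_def cinner_add_left)
  also have "\<dots> \<le> norm (A (Ad x) + Bd (B x)) * norm x"
    by (rule Re_cinner_le_norm_mult)
  also have "\<dots> \<le> onorm (\<lambda>v. A (Ad v) + Bd (B v))"
    using onorm[of x] \<open>norm x = 1\<close> by simp
  finally show ?thesis .
qed

lemma numerical_radius_AXB_le_limit:
  fixes A B X Ad Bd :: "'a::complex_inner \<Rightarrow> 'a" and x :: "nat \<Rightarrow> 'a"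
  assumes A: "bounded_clinear_op A" and B: "bounded_clinear_op B" and X: "bounded_clinear_op X"
    and adA: "is_adjoint A Ad" and adB: "is_adjoint B Bd" and pos: "positive_op X"
    and K: "\<And>z. norm (X z) \<le> K * norm z" and "0 \<le> K"
    and unit: "\<And>n. norm (x n) = 1"
    and attains: "(\<lambda>n. cmod (cinner (A (X (B (x n)))) (x n))) \<longlonglongrightarrow> numerical_radius (A \<circ> X \<circ> B)"
    and L: "(\<lambda>n. norm (Ad (x n)) / (4 * norm (B (x n)))
              * (INF l::complex. (norm (B (x n) - l *\<^sub>C Ad (x n)))\<^sup>2)) \<longlonglongrightarrow> L"
  shows "numerical_radius (A \<circ> X \<circ> B) \<le> K * (onorm (\<lambda>v. A (Ad v) + Bd (B v)) / 2 - L)"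
    and "0 \<le> L"
proof -
  define N where "N = onorm (\<lambda>v. A (Ad v) + Bd (B v))"
  define d where "d n = norm (Ad (x n)) / (4 * norm (B (x n)))
      * (INF l::complex. (norm (B (x n) - l *\<^sub>C Ad (x n)))\<^sup>2)" for n
  have pointwise: "cmod (cinner (A (X (B (x n)))) (x n)) \<le> K * (N / 2 - d n)" for n
  proof -
    have "cmod (cinner (A (X (B (x n)))) (x n)) = cmod (cinner (X (B (x n))) (Ad (x n)))"
      using adA by (simp add: is_adjoint_def)
    also have "\<dots> \<le> K * (((norm (B (x n)))\<^sup>2 + (norm (Ad (x n)))\<^sup>2) / 2 - d n)"
      unfolding d_def by (rule positive_op_cmod_cinner_le_refined[OF X pos K \<open>0 \<le> K\<close>])
    also have "\<dots> \<le> K * (N / 2 - d n)"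
      using norm_sq_adjoint_add_norm_sq_le_onorm[OF A B adA adB unit[of n]] \<open>0 \<le> K\<close>
      by (intro mult_left_mono) (simp_all add: N_def add.commute)
    finally show ?thesis .
  qed
  have "d \<longlonglongrightarrow> L"
    using L unfolding d_def[abs_def] .
  show "numerical_radius (A \<circ> X \<circ> B) \<le> K * (N / 2 - L)"
    by (rule tendsto_le[OF trivial_limit_sequentially tendsto_mult[OF tendsto_const
          tendsto_diff[OF tendsto_const \<open>d \<longlonglongrightarrow> L\<close>]] attains])
      (intro always_eventually allI pointwise)
  show "0 \<le> L"
    by (rule tendsto_lowerbound[OF \<open>d \<longlonglongrightarrow> L\<close>])
      (simp_all add: d_def always_eventually INF_norm_diff_scaleC_nonneg)
qed

theorem theorem2p15:
  fixes A B X Ad Bd :: "'a::chilbert_space \<Rightarrow> 'a" and x :: "nat \<Rightarrow> 'a" and L :: real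
  assumes "bounded_clinear_op A" "bounded_clinear_op B" "bounded_clinear_op X"
    and "is_adjoint A Ad" "is_adjoint B Bd"
    and "B \<noteq> (\<lambda>_. 0)" and "positive_op X"
    and "\<forall>n. norm (x n) = 1"
    and "(\<lambda>n. cmod (cinner (A (X (B (x n)))) (x n))) \<longlonglongrightarrow> numerical_radius (A \<circ> X \<circ> B)"
    and "(\<lambda>n. norm (Ad (x n)) / (2 * norm (B (x n)))
              * (INF l::complex. (norm (B (x n) - l *\<^sub>C Ad (x n)))^2)) \<longlonglongrightarrow> L"
  shows "numerical_radius (A \<circ> X \<circ> B)
           \<le> onorm X / 2 * (onorm (\<lambda>v. A (Ad v) + Bd (B v)) - L)
       \<and> onorm X / 2 * (onorm (\<lambda>v. A (Ad v) + Bd (B v)) - L)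
           \<le> onorm X / 2 * onorm (\<lambda>v. A (Ad v) + Bd (B v))
       \<and> (\<forall>(y :: nat \<Rightarrow> 'a) (L' :: real).
            (\<forall>n. norm (y n) = 1)
            \<and> (\<lambda>n. cmod (cinner (A (B (y n))) (y n))) \<longlonglongrightarrow> numerical_radius (A \<circ> B)
            \<and> (\<lambda>n. norm (Ad (y n)) / (4 * norm (B (y n)))
                   * (INF l::complex. (norm (B (y n) - l *\<^sub>C Ad (y n)))^2)) \<longlonglongrightarrow> L'
            \<longrightarrow> numerical_radius (A \<circ> B) \<le> 1 / 2 * onorm (\<lambda>v. A (Ad v) + Bd (B v)) - L'
              \<and> 1 / 2 * onorm (\<lambda>v. A (Ad v) + Bd (B v)) - L'
                  \<le> 1 / 2 * onorm (\<lambda>v. A (Ad v) + Bd (B v)))"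
proof -
  define N where "N = onorm (\<lambda>v. A (Ad v) + Bd (B v))"
  have "bounded_linear X"
    using assms(3) by (rule bounded_clinear_op_imp_bounded_linear)
  then have KX: "\<And>z. norm (X z) \<le> onorm X * norm z" and "0 \<le> onorm X"
    by (simp_all add: onorm onorm_pos_le)
  have "(\<lambda>n. norm (Ad (x n)) / (4 * norm (B (x n)))
              * (INF l::complex. (norm (B (x n) - l *\<^sub>C Ad (x n)))\<^sup>2)) \<longlonglongrightarrow> L / 2"
    using tendsto_divide[OF assms(10) tendsto_const[of 2]] by (simp add: mult.commute)
  note bound = numerical_radius_AXB_le_limit[OF assms(1-5,7) KX \<open>0 \<le> onorm X\<close>
      assms(8)[rule_format] assms(9) this]
  have "numerical_radius (A \<circ> X \<circ> B) \<le> onorm X / 2 * (N - L)" and "0 \<le> L"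
    using bound by (simp_all add: N_def algebra_simps)
  moreover have "onorm X / 2 * (N - L) \<le> onorm X / 2 * N"
    using \<open>0 \<le> onorm X\<close> \<open>0 \<le> L\<close> by (simp add: mult_left_mono)
  moreover have "numerical_radius (A \<circ> B) \<le> 1 / 2 * N - L' \<and> 1 / 2 * N - L' \<le> 1 / 2 * N"
    if "\<forall>n. norm (y n) = 1"
      and "(\<lambda>n. cmod (cinner (A (B (y n))) (y n))) \<longlonglongrightarrow> numerical_radius (A \<circ> B)"
      and "(\<lambda>n. norm (Ad (y n)) / (4 * norm (B (y n)))
              * (INF l::complex. (norm (B (y n) - l *\<^sub>C Ad (y n)))\<^sup>2)) \<longlonglongrightarrow> L'"
    for y :: "nat \<Rightarrow> 'a" and L'
  proof -
    have "bounded_clinear_op (id :: 'a \<Rightarrow> 'a)" "positive_op (id :: 'a \<Rightarrow> 'a)"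
      by (auto simp: bounded_clinear_op_def positive_op_def cinner_self_real cinner_self_nonneg
          intro!: exI[of _ 1])
    from numerical_radius_AXB_le_limit[OF assms(1,2) this(1) assms(4,5) this(2), of 1 y L'] that
    show ?thesis by (simp add: N_def)
  qed
  ultimately show ?thesis
    unfolding N_def by blast
qed

end
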